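(* Let $T>0$ and let $a_0,b_0,\psi_0,\rho\in\mathbb{R}$ satisfy $a_0,b_0,\psi_0\ge0$ and $\rho>a_0^2+2b_0+2\psi_0/T$. Let $\psi:[0,T]\to[0,+\infty)$ be absolutely continuous with $\psi(0)=\psi_0$ and $$\psi'+\rho\le a_0\rho^{1/2}+b_0\quad\text{a.e. in the set }P:=\{t\in(0,T):\psi(t)>0\}.$$ Then: (i) if $\psi_0=0$, then $\psi$ vanishes identically; (ii) if $\psi_0>0$, there exists $T^*\in(0,T)$ with $T^*\le 2\psi_0/(\rho-a_0^2-2b_0)$ such that $\psi$ is strictly decreasing in $(0,T^* )$ and $\psi$ vanishes in $[T^*,T]$. *)

theory Defs
  imports "HOL-Analysis.Analysis"
begin

definition abs_continuous_on :: "real \<Rightarrow> real \<Rightarrow> (real \<Rightarrow> real) \<Rightarrow> bool" where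
  "abs_continuous_on lo hi f \<longleftrightarrow>
     (\<forall>\<epsilon>>0. \<exists>\<delta>>0. \<forall>(n::nat) (a::nat \<Rightarrow> real) (b::nat \<Rightarrow> real).
        (\<forall>k<n. lo \<le> a k \<and> a k \<le> b k \<and> b k \<le> hi) \<longrightarrow>
        (\<forall>i<n. \<forall>j<n. i \<noteq> j \<longrightarrow> b i \<le> a j \<or> b j \<le> a i) \<longrightarrow>
        (\<Sum>k<n. b k - a k) < \<delta> \<longrightarrow>
        (\<Sum>k<n. \<bar>f (b k) - f (a k)\<bar>) < \<epsilon>)"

end

theory Submission
  imports Defs
begin

text \<open>Put \<open>\<kappa> = (\<rho> - a0\<^sup>2 - 2 b0) / 2\<close>, so that \<open>\<kappa> T > \<psi>0\<close>. Since
  \<open>a0 \<surd>\<rho> \<le> (a0\<^sup>2 + \<rho>) / 2\<close>, the hypothesis gives \<open>\<psi>' \<le> -\<kappa>\<close> almost everywhere on every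
  interval where \<open>\<psi> > 0\<close>. An absolutely continuous function whose derivative is bounded by
  \<open>c\<close> almost everywhere grows at most like \<open>c (t - s)\<close>: apply Cousin's lemma to a gauge that
  controls difference quotients at good tags and keeps the intervals tagged in the exceptional
  null set inside an open set of small measure, where absolute continuity makes their
  contribution small. Hence \<open>\<psi>\<close> decreases at rate at least \<open>\<kappa>\<close> while positive, so it can never
  leave zero once it hits it, and from \<open>\<psi>0 > 0\<close> it must hit zero at some \<open>T* \<le> \<psi>0 / \<kappa> < T\<close>.\<close>

lemma abs_continuous_on_imp_continuous_on:
  assumes "abs_continuous_on lo hi f"
  shows "continuous_on {lo..hi} f"
  unfolding continuous_on_iff
proof (intro ballI allI impI)
  fix x e :: real assume x: "x \<in> {lo..hi}" and "e > 0"
  then obtain \<delta> where "\<delta> > 0" and small: "\<forall>(n::nat) a b. (\<forall>k<n. lo \<le> a k \<and> a k \<le> b k \<and> b k \<le> hi) \<longrightarrow>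
        (\<forall>i<n. \<forall>j<n. i \<noteq> j \<longrightarrow> b i \<le> a j \<or> b j \<le> a i) \<longrightarrow>
        (\<Sum>k<n. b k - a k) < \<delta> \<longrightarrow> (\<Sum>k<n. \<bar>f (b k) - f (a k)\<bar>) < e"
    using assms unfolding abs_continuous_on_def by blast
  show "\<exists>d>0. \<forall>x'\<in>{lo..hi}. dist x' x < d \<longrightarrow> dist (f x') (f x) < e"
  proof (intro exI[of _ \<delta>] conjI ballI impI \<open>\<delta> > 0\<close>)
    fix x' assume "x' \<in> {lo..hi}" "dist x' x < \<delta>"
    then have "(\<Sum>k<Suc 0. \<bar>f ((\<lambda>_. max x x') k) - f ((\<lambda>_. min x x') k)\<bar>) < e"
      using x by (intro small[rule_format]) (auto simp: dist_real_def)
    then show "dist (f x') (f x) < e"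
      by (cases "x \<le> x'") (auto simp: dist_real_def abs_minus_commute)
  qed
qed

lemma disjoint_greaterThanLessThan_imp_le:
  fixes u1 v1 u2 v2 :: real
  assumes "u1 < v1" "u2 < v2" "{u1<..<v1} \<inter> {u2<..<v2} = {}"
  shows "v1 \<le> u2 \<or> v2 \<le> u1"
proof (rule ccontr)
  assume "\<not> (v1 \<le> u2 \<or> v2 \<le> u1)"
  then have "(max u1 u2 + min v1 v2) / 2 \<in> {u1<..<v1} \<inter> {u2<..<v2}"
    using assms(1,2) by auto
  with assms(3) show False by blast
qed

lemma abs_continuous_onE:
  assumes "abs_continuous_on lo hi f" "\<epsilon> > 0"
  obtains \<delta> where "\<delta> > 0"
    "\<And>I a b. finite I \<Longrightarrow> (\<forall>i\<in>I. lo \<le> a i \<and> a i \<le> b i \<and> b i \<le> hi) \<Longrightarrow>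
       (\<forall>i\<in>I. \<forall>j\<in>I. i \<noteq> j \<longrightarrow> {a i<..<b i} \<inter> {a j<..<b j} = {}) \<Longrightarrow>
       (\<Sum>i\<in>I. b i - a i) < \<delta> \<Longrightarrow> (\<Sum>i\<in>I. \<bar>f (b i) - f (a i)\<bar>) < \<epsilon>"
proof -
  obtain \<delta> where "\<delta> > 0" and small: "\<forall>(n::nat) a b. (\<forall>k<n. lo \<le> a k \<and> a k \<le> b k \<and> b k \<le> hi) \<longrightarrow>
        (\<forall>i<n. \<forall>j<n. i \<noteq> j \<longrightarrow> b i \<le> a j \<or> b j \<le> a i) \<longrightarrow>
        (\<Sum>k<n. b k - a k) < \<delta> \<longrightarrow> (\<Sum>k<n. \<bar>f (b k) - f (a k)\<bar>) < \<epsilon>"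
    using assms unfolding abs_continuous_on_def by blast
  have "(\<Sum>i\<in>I. \<bar>f (b i) - f (a i)\<bar>) < \<epsilon>"
    if I: "finite I" and ends: "\<forall>i\<in>I. lo \<le> a i \<and> a i \<le> b i \<and> b i \<le> hi"
      and disj: "\<forall>i\<in>I. \<forall>j\<in>I. i \<noteq> j \<longrightarrow> {a i<..<b i} \<inter> {a j<..<b j} = {}"
      and short: "(\<Sum>i\<in>I. b i - a i) < \<delta>" for I and a b :: "'i \<Rightarrow> real"
  proof -
    define J where "J = {i\<in>I. a i < b i}"
      \<comment> \<open>degenerate intervals contribute nothing, but may violate the endpoint form of non-overlap\<close>
    have J: "finite J" "J \<subseteq> I" using I by (auto simp: J_def)
    have degenerate: "\<forall>i\<in>I - J. a i = b i" using ends by (auto simp: J_def)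
    obtain h where h: "bij_betw h {..<card J} J"
      using ex_bij_betw_nat_finite[OF J(1)] by (auto simp: lessThan_atLeast0)
    then have hJ: "h k \<in> J" if "k < card J" for k using that by (auto dest: bij_betwE)
    have inside: "\<forall>k<card J. lo \<le> a (h k) \<and> a (h k) \<le> b (h k) \<and> b (h k) \<le> hi"
      using hJ ends J(2) by blast
    have nonoverlapping: "\<forall>i<card J. \<forall>j<card J. i \<noteq> j \<longrightarrow> b (h i) \<le> a (h j) \<or> b (h j) \<le> a (h i)"
    proof (intro allI impI)
      fix i j assume "i < card J" "j < card J" "i \<noteq> j"
      then have "h i \<noteq> h j" "h i \<in> J" "h j \<in> J"
        using h hJ by (auto simp: bij_betw_def inj_on_def)
      then show "b (h i) \<le> a (h j) \<or> b (h j) \<le> a (h i)"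
        using disj J(2) by (intro disjoint_greaterThanLessThan_imp_le) (auto simp: J_def)
    qed
    have "(\<Sum>k<card J. b (h k) - a (h k)) = (\<Sum>i\<in>J. b i - a i)"
      using sum.reindex_bij_betw[OF h, of "\<lambda>i. b i - a i"] .
    also have "\<dots> = (\<Sum>i\<in>I. b i - a i)"
      using J degenerate I by (intro sum.mono_neutral_left) auto
    finally have "(\<Sum>k<card J. b (h k) - a (h k)) < \<delta>" using short by simp
    then have "(\<Sum>k<card J. \<bar>f (b (h k)) - f (a (h k))\<bar>) < \<epsilon>"
      using small[THEN spec, of "card J", THEN spec, of "a \<circ> h", THEN spec, of "b \<circ> h"]
        inside nonoverlapping by simp
    also have "(\<Sum>k<card J. \<bar>f (b (h k)) - f (a (h k))\<bar>) = (\<Sum>i\<in>J. \<bar>f (b i) - f (a i)\<bar>)"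
      using sum.reindex_bij_betw[OF h, of "\<lambda>i. \<bar>f (b i) - f (a i)\<bar>"] .
    also have "\<dots> = (\<Sum>i\<in>I. \<bar>f (b i) - f (a i)\<bar>)"
      using J degenerate I by (intro sum.mono_neutral_left) auto
    finally show ?thesis .
  qed
  with \<open>\<delta> > 0\<close> show ?thesis using that by blast
qed

lemma sum_interval_lengths_le_measure:
  fixes a b :: "'i \<Rightarrow> real"
  assumes "finite I" "U \<in> lmeasurable"
    and sub: "\<forall>i\<in>I. a i \<le> b i \<and> {a i..b i} \<subseteq> U"
    and disj: "\<forall>i\<in>I. \<forall>j\<in>I. i \<noteq> j \<longrightarrow> {a i<..<b i} \<inter> {a j<..<b j} = {}"
  shows "(\<Sum>i\<in>I. b i - a i) \<le> measure lebesgue U"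
proof -
  have overlaps: "pairwise (\<lambda>i j. negligible ({a i..b i} \<inter> {a j..b j})) I"
  proof (rule pairwiseI)
    fix i j assume "i \<in> I" "j \<in> I" "i \<noteq> j"
    then have "{a i..b i} \<inter> {a j..b j} \<subseteq> {a i, b i, a j, b j}"
      using disj by fastforce
    then show "negligible ({a i..b i} \<inter> {a j..b j})"
      by (rule negligible_subset[OF negligible_finite, rotated]) auto
  qed
  have "(\<Sum>i\<in>I. b i - a i) = (\<Sum>i\<in>I. measure lebesgue {a i..b i})"
    using sub by simp
  also have "\<dots> = measure lebesgue (\<Union>i\<in>I. {a i..b i})"
    by (rule measure_negligible_finite_Union_image[OF \<open>finite I\<close> _ overlaps, symmetric]) auto
  also have "\<dots> \<le> measure lebesgue U"
    using sub assms(1,2) by (intro measure_mono_fmeasurable) auto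
  finally show ?thesis .
qed

lemma negligible_open_cover:
  assumes "negligible B" "\<delta> > 0"
  obtains U where "open U" "B \<subseteq> U" "U \<in> lmeasurable" "measure lebesgue U < \<delta>"
proof -
  have B: "B \<in> null_sets lebesgue" using assms(1) by (simp add: negligible_iff_null_sets)
  then obtain U where U: "open U" "B \<subseteq> U" "U - B \<in> lmeasurable" "emeasure lebesgue (U - B) < ennreal \<delta>"
    using sets_lebesgue_outer_open[OF _ assms(2), of B] by auto
  have "U = (U - B) \<union> B" using U(2) by blast
  then have "U \<in> lmeasurable"
    using U(3) B by (metis fmeasurableI_null_sets fmeasurable.Un)
  moreover have "measure lebesgue U = measure lebesgue (U - B)"
    using measure_Diff_null_set[OF _ B] \<open>U \<in> lmeasurable\<close> by (simp add: fmeasurable_def)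
  moreover have "measure lebesgue (U - B) < \<delta>"
    using U(3,4) assms(2) by (metis emeasure_eq_measure2 ennreal_leI linorder_not_le)
  ultimately show ?thesis using that U(1,2) by auto
qed

lemma deriv_straddle:
  fixes f :: "real \<Rightarrow> real"
  assumes "f differentiable at x" "deriv f x < C"
  shows "\<exists>d>0. \<forall>u v. u \<le> x \<longrightarrow> x \<le> v \<longrightarrow> {u..v} \<subseteq> ball x d \<longrightarrow> f v - f u \<le> C * (v - u)"
proof -
  have "(f has_real_derivative deriv f x) (at x)"
    using assms(1) by (simp add: DERIV_deriv_iff_real_differentiable)
  then have "((\<lambda>y. (f y - f x) / (y - x)) \<longlongrightarrow> deriv f x) (at x)"
    by (simp add: has_field_derivative_iff)
  then have "\<forall>\<^sub>F y in at x. dist ((f y - f x) / (y - x)) (deriv f x) < C - deriv f x"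
    by (rule tendstoD) (use assms(2) in simp)
  then obtain d where "d > 0"
    and quotient: "\<And>y. y \<noteq> x \<Longrightarrow> dist y x < d \<Longrightarrow> (f y - f x) / (y - x) < C"
    unfolding eventually_at by (fastforce simp: dist_real_def)
  have right: "f v - f x \<le> C * (v - x)" if "v \<in> ball x d" "x \<le> v" for v
  proof (cases "v = x")
    case False
    then show ?thesis
      using quotient[OF False] that by (simp add: dist_commute pos_divide_less_eq less_imp_le)
  qed simp
  have left: "f x - f u \<le> C * (x - u)" if "u \<in> ball x d" "u \<le> x" for u
  proof (cases "u = x")
    case False
    have "(f u - f x) / (u - x) = (f x - f u) / (x - u)"
      by (metis minus_diff_eq minus_divide_divide)
    then show ?thesis
      using quotient[OF False] that False by (simp add: dist_commute pos_divide_less_eq less_imp_le)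
  qed simp
  have "f v - f u \<le> C * (v - u)" if "u \<le> x" "x \<le> v" "{u..v} \<subseteq> ball x d" for u v
  proof -
    have "u \<in> {u..v}" "v \<in> {u..v}" using that(1,2) by auto
    then have "u \<in> ball x d" "v \<in> ball x d" using that(3) by blast+
    then show ?thesis using right left that by (fastforce simp: algebra_simps)
  qed
  with \<open>d > 0\<close> show ?thesis by blast
qed

lemma tagged_division_of_real_interval:
  fixes s t :: real
  assumes "p tagged_division_of {s..t}" "(x, K) \<in> p"
  shows "K = {Inf K..Sup K} \<and> s \<le> Inf K \<and> Inf K \<le> x \<and> x \<le> Sup K \<and> Sup K \<le> t"
proof -
  obtain u v where "K = cbox u v" using tagged_division_ofD(4)[OF assms] by blast
  then have "K = {u..v}" by simp
  moreover have "x \<in> K" "K \<subseteq> {s..t}" using tagged_division_ofD(2,3)[OF assms] by auto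
  ultimately show ?thesis by auto
qed

lemma tagged_division_of_real_interiors_disjoint:
  fixes s t :: real
  assumes p: "p tagged_division_of {s..t}" and "z \<in> p" "z' \<in> p" "z \<noteq> z'"
  shows "{Inf (snd z)<..<Sup (snd z)} \<inter> {Inf (snd z')<..<Sup (snd z')} = {}"
proof -
  have "interior (snd z) \<inter> interior (snd z') = {}"
    using tagged_division_ofD(5)[OF p, of "fst z" "snd z" "fst z'" "snd z'"] assms(2-4) by auto
  then show ?thesis
    using tagged_division_of_real_interval[OF p, of "fst z" "snd z"]
      tagged_division_of_real_interval[OF p, of "fst z'" "snd z'"] assms(2,3)
    by (metis interior_atLeastAtMost_real prod.collapse)
qed

lemma tagged_division_increment_le:
  fixes f :: "real \<Rightarrow> real"
  assumes "s \<le> t" "p tagged_division_of {s..t}" "Q \<subseteq> p"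
    and "\<And>z. z \<in> p - Q \<Longrightarrow> f (Sup (snd z)) - f (Inf (snd z)) \<le> C * (Sup (snd z) - Inf (snd z))"
  shows "f t - f s \<le> C * (t - s - (\<Sum>z\<in>Q. Sup (snd z) - Inf (snd z)))
                      + (\<Sum>z\<in>Q. \<bar>f (Sup (snd z)) - f (Inf (snd z))\<bar>)"
proof -
  have "finite p" using assms(2) by blast
  have split: "sum g p = sum g (p - Q) + sum g Q" for g :: "real \<times> real set \<Rightarrow> real"
    using sum.subset_diff[OF assms(3) \<open>finite p\<close>] .
  have "f t - f s = (\<Sum>z\<in>p - Q. f (Sup (snd z)) - f (Inf (snd z))) + (\<Sum>z\<in>Q. f (Sup (snd z)) - f (Inf (snd z)))"
    using additive_tagged_division_1[OF assms(1,2), of f] by (simp add: case_prod_beta split)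
  also have "\<dots> \<le> C * (\<Sum>z\<in>p - Q. Sup (snd z) - Inf (snd z)) + (\<Sum>z\<in>Q. \<bar>f (Sup (snd z)) - f (Inf (snd z))\<bar>)"
    unfolding sum_distrib_left using assms(4) by (intro add_mono sum_mono) auto
  also have "(\<Sum>z\<in>p - Q. Sup (snd z) - Inf (snd z)) = t - s - (\<Sum>z\<in>Q. Sup (snd z) - Inf (snd z))"
    using additive_tagged_division_1[OF assms(1,2), of "\<lambda>x. x"] by (simp add: case_prod_beta split)
  finally show ?thesis .
qed

lemma tagged_division_with_local_bounds:
  fixes f :: "real \<Rightarrow> real"
  assumes "open U" "B \<subseteq> U"
    and local: "\<And>x. x \<in> {s..t} - B \<Longrightarrow> \<exists>d>0. \<forall>u v. u \<le> x \<longrightarrow> x \<le> v \<longrightarrow>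
                  {u..v} \<subseteq> ball x d \<longrightarrow> f v - f u \<le> C * (v - u)"
  obtains p where "p tagged_division_of {s..t}"
    "\<And>x K. (x, K) \<in> p \<Longrightarrow> x \<in> B \<Longrightarrow> K \<subseteq> U"
    "\<And>x K. (x, K) \<in> p \<Longrightarrow> x \<notin> B \<Longrightarrow> f (Sup K) - f (Inf K) \<le> C * (Sup K - Inf K)"
proof -
  have "\<forall>x. \<exists>d>0. (x \<in> B \<longrightarrow> ball x d \<subseteq> U) \<and> (x \<in> {s..t} - B \<longrightarrow>
          (\<forall>u v. u \<le> x \<longrightarrow> x \<le> v \<longrightarrow> {u..v} \<subseteq> ball x d \<longrightarrow> f v - f u \<le> C * (v - u)))"
    (is "\<forall>x. ?gauge_at x")
  proof
    fix x
    show "?gauge_at x"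
    proof (cases "x \<in> B")
      case True
      then obtain d where "d > 0" "ball x d \<subseteq> U" using assms(1,2) openE by blast
      with True show ?thesis by blast
    next
      case False
      then show ?thesis using local[of x] by (cases "x \<in> {s..t}") (auto intro: exI[of _ 1])
    qed
  qed
  then obtain d where d: "\<And>x. d x > 0" "\<And>x. x \<in> B \<Longrightarrow> ball x (d x) \<subseteq> U"
    "\<And>x u v. x \<in> {s..t} - B \<Longrightarrow> u \<le> x \<Longrightarrow> x \<le> v \<Longrightarrow> {u..v} \<subseteq> ball x (d x) \<Longrightarrow>
       f v - f u \<le> C * (v - u)"
    by metis
  have "gauge (\<lambda>x. ball x (d x))" using d(1) gauge_ball_dependent by blast
  then obtain p where p: "p tagged_division_of {s..t}" and fine: "(\<lambda>x. ball x (d x)) fine p"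
    using fine_division_exists[of _ s t] by auto
  show thesis
  proof (rule that[OF p])
    fix x K assume xK: "(x, K) \<in> p"
    then have K: "K \<subseteq> ball x (d x)" using fine by (auto simp: fine_def)
    then show "x \<in> B \<Longrightarrow> K \<subseteq> U" using d(2) by blast
    have "x \<in> {s..t}" using tagged_division_ofD(2,3)[OF p xK] by blast
    moreover have ends: "K = {Inf K..Sup K}" "Inf K \<le> x" "x \<le> Sup K"
      using tagged_division_of_real_interval[OF p xK] by auto
    moreover have "{Inf K..Sup K} \<subseteq> ball x (d x)" using K ends(1) by metis
    ultimately show "x \<notin> B \<Longrightarrow> f (Sup K) - f (Inf K) \<le> C * (Sup K - Inf K)"
      using d(3) by blast
  qed
qed

lemma abs_continuous_on_increment_le_approx:
  fixes f :: "real \<Rightarrow> real"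
  assumes "s \<le> t" "lo \<le> s" "t \<le> hi" "abs_continuous_on lo hi f" "negligible N"
    and deriv_le: "\<And>x. x \<in> {s<..<t} - N \<Longrightarrow> f differentiable at x \<and> deriv f x \<le> c"
    and "\<epsilon> > 0"
  shows "f t - f s \<le> c * (t - s) + \<epsilon> * (t - s + \<bar>c\<bar> + 1)"
proof -
  obtain \<delta> where "\<delta> > 0" and small_variation:
    "\<And>(I :: (real \<times> real set) set) a b. finite I \<Longrightarrow> (\<forall>i\<in>I. lo \<le> a i \<and> a i \<le> b i \<and> b i \<le> hi) \<Longrightarrow>
       (\<forall>i\<in>I. \<forall>j\<in>I. i \<noteq> j \<longrightarrow> {a i<..<b i} \<inter> {a j<..<b j} = {}) \<Longrightarrow>
       (\<Sum>i\<in>I. b i - a i) < \<delta> \<Longrightarrow> (\<Sum>i\<in>I. \<bar>f (b i) - f (a i)\<bar>) < \<epsilon>"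
    by (rule abs_continuous_onE[OF assms(4,7)], rule that)
  define B where "B = N \<union> {s, t}"
    \<comment> \<open>the endpoints are not covered by the derivative hypothesis\<close>
  have "negligible B" using assms(5) by (simp add: B_def negligible_Un negligible_finite)
  then obtain U where U: "open U" "B \<subseteq> U" "U \<in> lmeasurable" "measure lebesgue U < min \<delta> \<epsilon>"
    using negligible_open_cover[of B "min \<delta> \<epsilon>"] \<open>\<delta> > 0\<close> \<open>\<epsilon> > 0\<close> by auto
  have "\<exists>d>0. \<forall>u v. u \<le> x \<longrightarrow> x \<le> v \<longrightarrow> {u..v} \<subseteq> ball x d \<longrightarrow> f v - f u \<le> (c + \<epsilon>) * (v - u)"
    if "x \<in> {s..t} - B" for x
    using deriv_le[of x] that \<open>\<epsilon> > 0\<close> by (intro deriv_straddle) (auto simp: B_def)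
  then obtain p where p: "p tagged_division_of {s..t}"
    and bad_in_U: "\<And>x K. (x, K) \<in> p \<Longrightarrow> x \<in> B \<Longrightarrow> K \<subseteq> U"
    and good_bound: "\<And>x K. (x, K) \<in> p \<Longrightarrow> x \<notin> B \<Longrightarrow> f (Sup K) - f (Inf K) \<le> (c + \<epsilon>) * (Sup K - Inf K)"
    using tagged_division_with_local_bounds[OF U(1,2)] by blast
  define Q where "Q = {z \<in> p. fst z \<in> B}"
  define a where "a z = Inf (snd z)" for z :: "real \<times> real set"
  define b where "b z = Sup (snd z)" for z :: "real \<times> real set"
  have "finite Q" using p by (auto simp: Q_def)
  have ends: "snd z = {a z..b z} \<and> lo \<le> a z \<and> a z \<le> b z \<and> b z \<le> hi \<and> snd z \<subseteq> U" if "z \<in> Q" for z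
    using tagged_division_of_real_interval[OF p, of "fst z" "snd z"] bad_in_U[of "fst z" "snd z"]
      that assms(2,3) by (auto simp: a_def b_def Q_def)
  have disjoint: "\<forall>z\<in>Q. \<forall>z'\<in>Q. z \<noteq> z' \<longrightarrow> {a z<..<b z} \<inter> {a z'<..<b z'} = {}"
    using tagged_division_of_real_interiors_disjoint[OF p] by (auto simp: Q_def a_def b_def)
  define L where "L = (\<Sum>z\<in>Q. b z - a z)"
  have "L \<le> measure lebesgue U"
    unfolding L_def using ends disjoint by (intro sum_interval_lengths_le_measure \<open>finite Q\<close> U(3)) metis+
  then have L: "L < \<delta>" "L \<le> \<epsilon>" using U(4) by auto
  have "(\<Sum>z\<in>Q. \<bar>f (b z) - f (a z)\<bar>) < \<epsilon>"
    using ends disjoint L(1) unfolding L_def by (intro small_variation \<open>finite Q\<close>) auto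
  moreover have "f t - f s \<le> (c + \<epsilon>) * (t - s - L) + (\<Sum>z\<in>Q. \<bar>f (b z) - f (a z)\<bar>)"
    unfolding L_def a_def b_def
    using good_bound by (intro tagged_division_increment_le[OF assms(1) p]) (auto simp: Q_def)
  moreover have "0 \<le> L" unfolding L_def using ends by (intro sum_nonneg) auto
  then have "- c * L \<le> \<bar>c\<bar> * \<epsilon>"
    using L(2) by (metis abs_ge_minus_self abs_ge_zero mult_left_mono mult_minus_left mult_right_mono order_trans)
  moreover have "0 \<le> \<epsilon> * L" using \<open>0 \<le> L\<close> \<open>\<epsilon> > 0\<close> by simp
  ultimately show ?thesis by (simp add: algebra_simps)
qed

lemma abs_continuous_on_increment_le:
  fixes f :: "real \<Rightarrow> real"
  assumes "s \<le> t" "lo \<le> s" "t \<le> hi" "abs_continuous_on lo hi f" "negligible N"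
    and "\<And>x. x \<in> {s<..<t} - N \<Longrightarrow> f differentiable at x \<and> deriv f x \<le> c"
  shows "f t - f s \<le> c * (t - s)"
proof (rule field_le_epsilon)
  fix e :: real assume "e > 0"
  define C where "C = t - s + \<bar>c\<bar> + 1"
  have "C > 0" using \<open>s \<le> t\<close> by (simp add: C_def add_nonneg_pos)
  then show "f t - f s \<le> c * (t - s) + e"
    using abs_continuous_on_increment_le_approx[OF assms, of "e / C"] \<open>e > 0\<close>
    by (simp add: C_def[symmetric])
qed

lemma AE_lebesgue_negligible_exception:
  assumes "AE x in lebesgue. P x"
  obtains N where "negligible N" "\<And>x. x \<notin> N \<Longrightarrow> P x"
proof -
  obtain N where "\<And>x. x \<in> space lebesgue - N \<Longrightarrow> P x" "N \<in> null_sets lebesgue"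
    using AE_E3[OF assms] by blast
  then show thesis using that by (simp add: negligible_iff_null_sets)
qed

lemma vanishes_after_zero:
  fixes f :: "real \<Rightarrow> real"
  assumes "continuous_on {lo..hi} f" "\<forall>x\<in>{lo..hi}. f x \<ge> 0"
    and nonincreasing: "\<And>s t. lo \<le> s \<Longrightarrow> s \<le> t \<Longrightarrow> t \<le> hi \<Longrightarrow> \<forall>x\<in>{s<..<t}. f x > 0 \<Longrightarrow> f t \<le> f s"
    and "a \<in> {lo..hi}" "f a = 0"
  shows "\<forall>t\<in>{a..hi}. f t = 0"
proof (rule ccontr)
  assume "\<not> (\<forall>t\<in>{a..hi}. f t = 0)"
  then obtain t where t: "t \<in> {a..hi}" "f t > 0"
    using assms(2,4) by (metis atLeastAtMost_iff less_eq_real_def order_trans)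
  define Z where "Z = {x \<in> {a..t}. f x = 0}"
  have "closed Z" unfolding Z_def using assms(1,4) t(1)
    by (intro continuous_closed_preimage_constant) (auto intro: continuous_on_subset)
  moreover have "a \<in> Z" "bdd_above Z" using assms(5) t(1) by (auto simp: Z_def)
  ultimately have "Sup Z \<in> Z" using closed_contains_Sup by blast
  then have m: "a \<le> Sup Z" "Sup Z \<le> t" "f (Sup Z) = 0" by (auto simp: Z_def)
  have "\<forall>x\<in>{Sup Z<..<t}. f x > 0"
  proof
    fix x assume x: "x \<in> {Sup Z<..<t}"
    then have "x \<in> {a..t}" "x \<notin> Z" using m cSup_upper[OF _ \<open>bdd_above Z\<close>, of x] by auto
    moreover have "f x \<ge> 0" using assms(2,4) t(1) \<open>x \<in> {a..t}\<close> by auto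
    ultimately show "f x > 0" by (auto simp: Z_def)
  qed
  then have "f t \<le> f (Sup Z)" using nonincreasing[of "Sup Z" t] m assms(4) t(1) by auto
  with m t show False by simp
qed

lemma first_zero_under_decay:
  fixes f :: "real \<Rightarrow> real"
  assumes "0 \<le> T" "continuous_on {0..T} f" "\<forall>x\<in>{0..T}. f x \<ge> 0" "f 0 > 0" "f 0 < \<kappa> * T"
    and decay: "\<And>s t. 0 \<le> s \<Longrightarrow> s \<le> t \<Longrightarrow> t \<le> T \<Longrightarrow> \<forall>x\<in>{s<..<t}. f x > 0 \<Longrightarrow> f t - f s \<le> - \<kappa> * (t - s)"
  obtains Ts where "0 < Ts" "Ts < T" "\<kappa> * Ts \<le> f 0" "f Ts = 0" "\<forall>x\<in>{0..<Ts}. f x > 0"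
proof -
  define Z where "Z = {x \<in> {0..T}. f x = 0}"
  have positive_before: "f x > 0" if "x \<in> {0..T}" "\<forall>z\<in>Z. x < z" for x
    using that assms(3) by (force simp: Z_def)
  have "Z \<noteq> {}"
  proof
    assume "Z = {}"
    then have "f T - f 0 \<le> - \<kappa> * T" using decay[of 0 T] positive_before assms(1) by auto
    moreover have "f T \<ge> 0" using assms(1,3) by auto
    ultimately show False using assms(5) by simp
  qed
  moreover have "closed Z" unfolding Z_def
    using assms(2) by (intro continuous_closed_preimage_constant) auto
  moreover have "bdd_below Z" by (auto simp: Z_def intro: bdd_belowI[of _ 0])
  ultimately have "Inf Z \<in> Z" using closed_contains_Inf by blast
  then have Ts: "0 \<le> Inf Z" "Inf Z \<le> T" "f (Inf Z) = 0" by (auto simp: Z_def)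
  have positive: "\<forall>x\<in>{0..<Inf Z}. f x > 0"
    using positive_before cInf_lower[OF _ \<open>bdd_below Z\<close>] Ts(2) by force
  have "f (Inf Z) - f 0 \<le> - \<kappa> * Inf Z" using decay[of 0 "Inf Z"] Ts positive by auto
  then have "\<kappa> * Inf Z \<le> f 0" using Ts(3) by simp
  moreover have "Inf Z \<noteq> 0" using Ts(3) assms(4) by auto
  moreover have "Inf Z \<noteq> T" using \<open>\<kappa> * Inf Z \<le> f 0\<close> assms(5) by auto
  ultimately show thesis
    using that[of "Inf Z"] Ts positive by simp
qed

lemma extinction_under_decay:
  fixes f :: "real \<Rightarrow> real"
  assumes "0 < T" "continuous_on {0..T} f" "\<forall>x\<in>{0..T}. f x \<ge> 0" "0 < \<kappa>" "f 0 < \<kappa> * T"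
    and decay: "\<And>s t. 0 \<le> s \<Longrightarrow> s \<le> t \<Longrightarrow> t \<le> T \<Longrightarrow> \<forall>x\<in>{s<..<t}. f x > 0 \<Longrightarrow> f t - f s \<le> - \<kappa> * (t - s)"
  shows "(f 0 = 0 \<longrightarrow> (\<forall>t\<in>{0..T}. f t = 0)) \<and>
         (f 0 > 0 \<longrightarrow> (\<exists>Ts. 0 < Ts \<and> Ts < T \<and> Ts \<le> f 0 / \<kappa> \<and>
              (\<forall>s t. 0 < s \<and> s < t \<and> t < Ts \<longrightarrow> f t < f s) \<and> (\<forall>t\<in>{Ts..T}. f t = 0)))"
proof -
  have vanish: "\<forall>t\<in>{a..T}. f t = 0" if "a \<in> {0..T}" "f a = 0" for a
  proof (rule vanishes_after_zero[OF assms(2,3) _ that])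
    fix s t assume "0 \<le> s" "s \<le> t" "t \<le> T" "\<forall>x\<in>{s<..<t}. f x > 0"
    then have "f t - f s \<le> - \<kappa> * (t - s)" by (rule decay)
    moreover have "0 \<le> \<kappa> * (t - s)" using \<open>0 < \<kappa>\<close> \<open>s \<le> t\<close> by simp
    ultimately show "f t \<le> f s" by linarith
  qed
  show ?thesis
  proof (intro conjI impI)
    assume "f 0 = 0"
    then show "\<forall>t\<in>{0..T}. f t = 0" using vanish[of 0] \<open>0 < T\<close> by auto
  next
    assume "f 0 > 0"
    obtain Ts where Ts: "0 < Ts" "Ts < T" "\<kappa> * Ts \<le> f 0" "f Ts = 0" "\<forall>x\<in>{0..<Ts}. f x > 0"
      using first_zero_under_decay[OF less_imp_le[OF \<open>0 < T\<close>] assms(2,3) \<open>f 0 > 0\<close> assms(5) decay]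
      by blast
    have "f t < f s" if "0 < s" "s < t" "t < Ts" for s t
    proof -
      have "\<forall>x\<in>{s<..<t}. f x > 0" using Ts(5) that by auto
      then have "f t - f s \<le> - \<kappa> * (t - s)" using decay[of s t] that Ts(2) by simp
      moreover have "0 < \<kappa> * (t - s)" using \<open>0 < \<kappa>\<close> that by simp
      ultimately show ?thesis by linarith
    qed
    moreover have "Ts \<le> f 0 / \<kappa>" using Ts(3) \<open>0 < \<kappa>\<close> by (simp add: pos_le_divide_eq mult.commute)
    moreover have "\<forall>t\<in>{Ts..T}. f t = 0" using vanish[of Ts] Ts(1,2,4) by simp
    ultimately show "\<exists>Ts. 0 < Ts \<and> Ts < T \<and> Ts \<le> f 0 / \<kappa> \<and>
              (\<forall>s t. 0 < s \<and> s < t \<and> t < Ts \<longrightarrow> f t < f s) \<and> (\<forall>t\<in>{Ts..T}. f t = 0)"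
      using Ts(1,2) by blast
  qed
qed

lemma linear_sqrt_le_half_gap:
  fixes a b \<rho> :: real
  assumes "0 \<le> \<rho>"
  shows "a * sqrt \<rho> + b - \<rho> \<le> - ((\<rho> - a^2 - 2 * b) / 2)"
  using sum_squares_bound[of a "sqrt \<rho>"] assms by (simp add: field_simps)

theorem lemma4p1:
  fixes T a0 b0 \<psi>0 \<rho> :: real and \<psi> :: "real \<Rightarrow> real"
  assumes T_pos: "T > 0"
    and a0: "a0 \<ge> 0" and b0: "b0 \<ge> 0" and psi0: "\<psi>0 \<ge> 0"
    and rho: "\<rho> > a0^2 + 2 * b0 + 2 * \<psi>0 / T"
    and nonneg: "\<forall>t\<in>{0..T}. \<psi> t \<ge> 0"
    and ac: "abs_continuous_on 0 T \<psi>"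
    and init: "\<psi> 0 = \<psi>0"
    and ineq: "AE t in lebesgue. t \<in> {t\<in>{0<..<T}. \<psi> t > 0} \<longrightarrow>
                 (\<psi> differentiable at t \<and> deriv \<psi> t + \<rho> \<le> a0 * sqrt \<rho> + b0)"
  shows "(\<psi>0 = 0 \<longrightarrow> (\<forall>t\<in>{0..T}. \<psi> t = 0)) \<and>
         (\<psi>0 > 0 \<longrightarrow> (\<exists>Ts. 0 < Ts \<and> Ts < T \<and> Ts \<le> 2 * \<psi>0 / (\<rho> - a0^2 - 2 * b0) \<and>
              (\<forall>s t. 0 < s \<and> s < t \<and> t < Ts \<longrightarrow> \<psi> t < \<psi> s) \<and>
              (\<forall>t\<in>{Ts..T}. \<psi> t = 0)))"
proof -
  define \<kappa> where "\<kappa> = (\<rho> - a0^2 - 2 * b0) / 2"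
  have "0 \<le> \<psi>0 / T" "2 * \<psi>0 / T = 2 * (\<psi>0 / T)" "0 \<le> a0^2" using psi0 T_pos by auto
  moreover have "2 * \<kappa> = \<rho> - a0^2 - 2 * b0" by (simp add: \<kappa>_def)
  ultimately have "\<psi>0 / T < \<kappa>" "0 \<le> \<rho>" using rho b0 by linarith+
  have "0 < \<kappa>" using \<open>\<psi>0 / T < \<kappa>\<close> \<open>0 \<le> \<psi>0 / T\<close> by linarith
  have "\<psi> 0 < \<kappa> * T" using \<open>\<psi>0 / T < \<kappa>\<close> T_pos init by (simp add: pos_divide_less_eq)
  obtain N where "negligible N" and N: "\<And>t. t \<notin> N \<Longrightarrow> t \<in> {0<..<T} \<Longrightarrow> \<psi> t > 0 \<Longrightarrow>
      \<psi> differentiable at t \<and> deriv \<psi> t + \<rho> \<le> a0 * sqrt \<rho> + b0"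
    using AE_lebesgue_negligible_exception[OF ineq] by (metis (mono_tags, lifting) mem_Collect_eq)
  have decay: "\<psi> t - \<psi> s \<le> - \<kappa> * (t - s)"
    if "0 \<le> s" "s \<le> t" "t \<le> T" "\<forall>x\<in>{s<..<t}. \<psi> x > 0" for s t
  proof (rule abs_continuous_on_increment_le[OF that(2,1,3) ac \<open>negligible N\<close>])
    fix x assume x: "x \<in> {s<..<t} - N"
    then have "x \<in> {0<..<T}" "\<psi> x > 0" using that by auto
    then have "\<psi> differentiable at x \<and> deriv \<psi> x + \<rho> \<le> a0 * sqrt \<rho> + b0"
      using N x by blast
    then show "\<psi> differentiable at x \<and> deriv \<psi> x \<le> - \<kappa>"
      using linear_sqrt_le_half_gap[OF \<open>0 \<le> \<rho>\<close>, of a0 b0] by (simp add: \<kappa>_def)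
  qed
  have rate: "\<psi>0 / \<kappa> = 2 * \<psi>0 / (\<rho> - a0^2 - 2 * b0)" by (simp add: \<kappa>_def)
  show ?thesis
    using extinction_under_decay[OF T_pos abs_continuous_on_imp_continuous_on[OF ac] nonneg
        \<open>0 < \<kappa>\<close> \<open>\<psi> 0 < \<kappa> * T\<close> decay, unfolded init rate] .
qed

end
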